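(* Let $k$ be an algebraically closed field and let $A$ be a connected basic finite dimensional $k$-algebra which does not have a non-trivial grading. Then the (Gabriel) quiver of $A$ has exactly one vertex.
   Context: A grading on $A$ is a decomposition $A=\bigoplus_{i\in\mathbb{Z}}A_i$ into subspaces with $A_iA_j\subseteq A_{i+j}$ for all $i,j\in\mathbb{Z}$. The trivial grading is $A_0=A$; a grading is non-trivial if $A_i\neq 0$ for some $i\neq 0$. Here "$A$ has a non-trivial grading" means there is a non-trivial grading on an algebra isomorphic to $A$. Connected means $A$ is indecomposable as an algebra. *)

theory Defs
  imports Main "HOL-Computational_Algebra.Polynomial"
begin

definition alg_closed :: "'k::field itself \<Rightarrow> bool" where
  "alg_closed _ \<longleftrightarrow> (\<forall>p :: 'k poly. degree p \<ge> 1 \<longrightarrow> (\<exists>x. poly p x = 0))"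

definition fd_algebra :: "('k::field \<Rightarrow> 'a::ring_1 \<Rightarrow> 'a) \<Rightarrow> bool" where
  "fd_algebra scale \<longleftrightarrow> vector_space scale
     \<and> (\<forall>c x y. scale c (x * y) = scale c x * y \<and> scale c (x * y) = x * scale c y)
     \<and> (\<exists>B. finite B \<and> module.span scale B = UNIV)"

definition idempotent :: "'a::ring_1 \<Rightarrow> bool" where
  "idempotent e \<longleftrightarrow> e * e = e"

text \<open>Connected = indecomposable as an algebra: A is nonzero and has no central
  idempotents other than 0 and 1.\<close>
definition connected_alg :: "'a::ring_1 itself \<Rightarrow> bool" where
  "connected_alg _ \<longleftrightarrow> (0::'a) \<noteq> 1 \<and>
     (\<forall>e::'a. idempotent e \<and> (\<forall>x. e * x = x * e) \<longrightarrow> e = 0 \<or> e = 1)"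

definition primitive_idem :: "'a::ring_1 \<Rightarrow> bool" where
  "primitive_idem e \<longleftrightarrow> idempotent e \<and> e \<noteq> 0 \<and>
     (\<forall>e1 e2. idempotent e1 \<and> idempotent e2 \<and> e1 * e2 = 0 \<and> e2 * e1 = 0 \<and> e = e1 + e2
        \<longrightarrow> e1 = 0 \<or> e2 = 0)"

definition complete_prim_orth_idems :: "'a::ring_1 set \<Rightarrow> bool" where
  "complete_prim_orth_idems E \<longleftrightarrow> finite E \<and> (\<forall>e\<in>E. primitive_idem e) \<and>
     (\<forall>e\<in>E. \<forall>f\<in>E. e \<noteq> f \<longrightarrow> e * f = 0) \<and> sum id E = 1"

definition right_ideal_gen :: "'a::ring_1 \<Rightarrow> 'a set" where
  "right_ideal_gen e = {e * x | x. True}"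

definition right_mod_iso :: "'a::ring_1 \<Rightarrow> 'a \<Rightarrow> bool" where
  "right_mod_iso e f \<longleftrightarrow> (\<exists>\<phi>. bij_betw \<phi> (right_ideal_gen e) (right_ideal_gen f) \<and>
     (\<forall>m\<in>right_ideal_gen e. \<forall>n\<in>right_ideal_gen e. \<phi> (m + n) = \<phi> m + \<phi> n) \<and>
     (\<forall>m\<in>right_ideal_gen e. \<forall>a. \<phi> (m * a) = \<phi> m * a))"

definition basic_alg :: "'a::ring_1 itself \<Rightarrow> bool" where
  "basic_alg _ \<longleftrightarrow> (\<forall>E::'a set. complete_prim_orth_idems E \<longrightarrow>
     (\<forall>e\<in>E. \<forall>f\<in>E. e \<noteq> f \<longrightarrow> \<not> right_mod_iso e f))"

text \<open>Vertices of the (Gabriel) quiver of A, computed from a complete set E of primitive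
  orthogonal idempotents: isoclasses of the indecomposable projectives eA, e in E
  (equivalently, isoclasses of simple A-modules).\<close>
definition quiver_vertices :: "'a::ring_1 set \<Rightarrow> 'a set set" where
  "quiver_vertices E = E // {(e, f). e \<in> E \<and> f \<in> E \<and> right_mod_iso e f}"

definition is_grading :: "('k::field \<Rightarrow> 'a::ring_1 \<Rightarrow> 'a) \<Rightarrow> (int \<Rightarrow> 'a set) \<Rightarrow> bool" where
  "is_grading scale G \<longleftrightarrow>
     (\<forall>i. module.subspace scale (G i)) \<and>
     (\<forall>x. \<exists>!c :: int \<Rightarrow> 'a. finite {i. c i \<noteq> 0} \<and> (\<forall>i. c i \<in> G i) \<and>
            x = sum c {i. c i \<noteq> 0}) \<and>
     (\<forall>i j x y. x \<in> G i \<longrightarrow> y \<in> G j \<longrightarrow> x * y \<in> G (i + j))"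

definition has_nontrivial_grading :: "('k::field \<Rightarrow> 'a::ring_1 \<Rightarrow> 'a) \<Rightarrow> bool" where
  "has_nontrivial_grading scale \<longleftrightarrow>
     (\<exists>G. is_grading scale G \<and> (\<exists>i. i \<noteq> 0 \<and> G i \<noteq> {0}))"

end

theory Submission
  imports Defs
begin

text \<open>An idempotent e splits A into its Peirce pieces eAe, eA(1-e), (1-e)Ae and (1-e)A(1-e).
  Putting eA(1-e) in degree 1, (1-e)Ae in degree -1 and the two corners in degree 0
  gives a Z-grading of A. If A has no non-trivial grading, then eA(1-e) = (1-e)Ae = 0,
  which says precisely that e is central. Connectedness then forces every primitive
  idempotent to be 1, so a complete set of primitive orthogonal idempotents is a
  singleton and the quiver has one vertex.\<close>

definition peirce :: "'a::ring_1 \<Rightarrow> int \<Rightarrow> 'a \<Rightarrow> 'a" where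
  "peirce e i y =
     (if i = 0 then e*y*e + (1-e)*y*(1-e)
      else if i = 1 then e*y*(1-e)
      else if i = -1 then (1-e)*y*e
      else 0)"

lemma idempotent_mult_simps:
  fixes e :: "'a::ring_1"
  assumes "idempotent e"
  shows "e*e = e" "e*(e*z) = e*z" "e*(1-e) = 0" "e*((1-e)*z) = 0"
    "(1-e)*e = 0" "(1-e)*(e*z) = 0" "(1-e)*(1-e) = 1-e" "(1-e)*((1-e)*z) = (1-e)*z"
  using assms unfolding idempotent_def
  by (simp_all add: algebra_simps mult.assoc[symmetric])

lemma peirce_outside: "i \<notin> {-1, 0, 1} \<Longrightarrow> peirce e i y = 0"
  unfolding peirce_def by auto

lemma peirce_peirce:
  assumes "idempotent e"
  shows "peirce e i (peirce e j y) = (if i = j then peirce e j y else 0)"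
  unfolding peirce_def
  by (auto simp: distrib_left distrib_right mult.assoc idempotent_mult_simps[OF assms])

lemma peirce_decomposition: "peirce e (-1) y + peirce e 0 y + peirce e 1 y = y"
proof -
  have "y = (e + (1-e)) * y * (e + (1-e))" by simp
  also have "\<dots> = e*y*e + (1-e)*y*(1-e) + e*y*(1-e) + (1-e)*y*e"
    by (simp only: distrib_left distrib_right) (simp add: algebra_simps)
  finally show ?thesis unfolding peirce_def by (simp add: algebra_simps)
qed

lemma peirce_add: "peirce e i (x + y) = peirce e i x + peirce e i y"
  unfolding peirce_def by (simp add: algebra_simps)

lemma peirce_sum: "finite S \<Longrightarrow> peirce e i (sum c S) = (\<Sum>j\<in>S. peirce e i (c j))"
  by (induction S rule: finite_induct) (simp_all add: peirce_add, simp add: peirce_def)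

lemma peirce_mult:
  assumes "idempotent e" "peirce e i x = x" "peirce e j y = y"
  shows "peirce e (i + j) (x * y) = x * y"
proof (cases "i \<in> {-1, 0, 1} \<and> j \<in> {-1, 0, 1}")
  case True
  have "peirce e (i + j) (peirce e i x * peirce e j y) = peirce e i x * peirce e j y"
    using True unfolding peirce_def
    by (auto simp: distrib_left distrib_right mult.assoc idempotent_mult_simps[OF assms(1)])
  then show ?thesis using assms(2,3) by simp
next
  case False
  then have "x = 0 \<or> y = 0" using assms(2,3) peirce_outside by metis
  then show ?thesis unfolding peirce_def by auto
qed

lemma peirce_scale:
  fixes scale :: "'k::field \<Rightarrow> 'a::ring_1 \<Rightarrow> 'a"
  assumes "fd_algebra scale"
  shows "peirce e i (scale c y) = scale c (peirce e i y)"
proof -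
  interpret vector_space scale using assms unfolding fd_algebra_def by blast
  have "scale c (a*y*b) = a * scale c y * b" for a b
    using assms unfolding fd_algebra_def by metis
  then show ?thesis unfolding peirce_def by (simp add: scale_right_distrib)
qed

lemma peirce_unique_decomposition:
  assumes "idempotent e"
    and "finite {i. d i \<noteq> 0}" "\<forall>i. peirce e i (d i) = d i" "x = sum d {i. d i \<noteq> 0}"
  shows "d = (\<lambda>i. peirce e i x)"
proof
  fix j
  have "peirce e j (d i) = (if i = j then d i else 0)" for i
    using assms(3) peirce_peirce[OF assms(1), of j i "d i"] by metis
  then have "peirce e j x = (\<Sum>i\<in>{i. d i \<noteq> 0}. if i = j then d i else 0)"
    using assms(2,4) by (simp add: peirce_sum)
  also have "\<dots> = d j" by (simp add: sum.delta[OF assms(2)])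
  finally show "d j = peirce e j x" by simp
qed

lemma is_grading_peirce:
  fixes scale :: "'k::field \<Rightarrow> 'a::ring_1 \<Rightarrow> 'a"
  assumes "fd_algebra scale" "idempotent e"
  shows "is_grading scale (\<lambda>i. {y. peirce e i y = y})"
  unfolding is_grading_def
proof (intro conjI allI impI)
  interpret vector_space scale using assms(1) unfolding fd_algebra_def by blast
  fix i show "subspace {y. peirce e i y = y}"
    by (rule subspaceI) (auto simp: peirce_add peirce_scale[OF assms(1)], simp add: peirce_def)
next
  fix i j x y assume "x \<in> {y. peirce e i y = y}" "y \<in> {y. peirce e j y = y}"
  then show "x * y \<in> {y. peirce e (i + j) y = y}" using peirce_mult[OF assms(2)] by auto
next
  fix x
  define c where "c i = peirce e i x" for i
  have supp: "{i. c i \<noteq> 0} \<subseteq> {-1, 0, 1}" using peirce_outside unfolding c_def by blast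
  have "sum c {i. c i \<noteq> 0} = sum c {-1, 0, 1}"
    by (rule sum.mono_neutral_left) (use supp in auto)
  also have "\<dots> = x" using peirce_decomposition[of e x] by (simp add: c_def add.assoc)
  finally have "finite {i. c i \<noteq> 0} \<and> (\<forall>i. c i \<in> {y. peirce e i y = y}) \<and> x = sum c {i. c i \<noteq> 0}"
    using finite_subset[OF supp] by (simp add: c_def peirce_peirce[OF assms(2)])
  then show "\<exists>!c. finite {i. c i \<noteq> 0} \<and> (\<forall>i. c i \<in> {y. peirce e i y = y}) \<and> x = sum c {i. c i \<noteq> 0}"
    using peirce_unique_decomposition[OF assms(2)] unfolding c_def by (intro ex1I) auto
qed

lemma idempotent_central_if_no_nontrivial_grading:
  fixes scale :: "'k::field \<Rightarrow> 'a::ring_1 \<Rightarrow> 'a" and e :: 'a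
  assumes "fd_algebra scale" "\<not> has_nontrivial_grading scale" "idempotent e"
  shows "e * x = x * e"
proof -
  have trivial: "peirce e i y = 0" if "i \<noteq> 0" for i y
  proof -
    have "{y. peirce e i y = y} = {0}"
      using assms(2) that is_grading_peirce[OF assms(1,3)]
      unfolding has_nontrivial_grading_def by blast
    then show ?thesis using peirce_peirce[OF assms(3), of i i y] by auto
  qed
  have "e*x = e*x*e + e*x*(1-e)" by (simp add: algebra_simps)
  also have "\<dots> = e*x*e" using trivial[of 1 x] unfolding peirce_def by simp
  also have "\<dots> = e*x*e + (1-e)*x*e" using trivial[of "-1" x] unfolding peirce_def by simp
  also have "\<dots> = x*e" by (simp add: algebra_simps)
  finally show ?thesis .
qed

lemma complete_prim_orth_idems_singleton:
  assumes "connected_alg TYPE('a::ring_1)"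
    and central: "\<And>e x. idempotent e \<Longrightarrow> e * x = x * (e::'a)"
    and E: "complete_prim_orth_idems (E::'a set)"
  shows "\<exists>e. E = {e}"
proof -
  have nontrivial: "(0::'a) \<noteq> 1"
    and central_trivial: "\<And>e::'a. idempotent e \<Longrightarrow> \<forall>x. e * x = x * e \<Longrightarrow> e = 0 \<or> e = 1"
    using assms(1) unfolding connected_alg_def by blast+
  have "E \<noteq> {}" using E nontrivial unfolding complete_prim_orth_idems_def by auto
  then obtain e where e: "e \<in> E" by blast
  have "g = e" if g: "g \<in> E" for g
  proof (rule ccontr)
    assume "g \<noteq> e"
    then have prim: "primitive_idem e" "primitive_idem g" and "e * g = 0"
      using E e g unfolding complete_prim_orth_idems_def by auto
    moreover have "e = 0 \<or> e = 1"
      using prim(1) central central_trivial unfolding primitive_idem_def by blast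
    ultimately show False unfolding primitive_idem_def by auto
  qed
  with e show ?thesis by blast
qed

theorem mainTheorem2:
  fixes scale :: "'k::field \<Rightarrow> 'a::ring_1 \<Rightarrow> 'a"
  assumes "alg_closed TYPE('k)"
    and "fd_algebra scale"
    and "connected_alg TYPE('a)"
    and "basic_alg TYPE('a)"
    and "\<not> has_nontrivial_grading scale"
  shows "\<forall>E::'a set. complete_prim_orth_idems E \<longrightarrow> card (quiver_vertices E) = 1"
proof (intro allI impI)
  fix E :: "'a set" assume "complete_prim_orth_idems E"
  moreover have "\<And>e x. idempotent e \<Longrightarrow> e * x = x * (e::'a)"
    using idempotent_central_if_no_nontrivial_grading[OF assms(2,5)] .
  ultimately obtain e where "E = {e}"
    using complete_prim_orth_idems_singleton[OF assms(3)] by blast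
  then show "card (quiver_vertices E) = 1"
    unfolding quiver_vertices_def quotient_def by simp
qed

end
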